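(* Let $n\ge 1$ and $\pi\in S_n$. Then $\pi\in\mathcal C_n(321)$ if and only if $\hat\pi_1=n$ and $\hat\pi$ avoids each of the five vincular patterns $\underline{32}\,\underline{41}$, $\underline{14}\,\underline{23}$, $\underline{41}\,\underline{32}$, $\underline{23}\,\underline{14}$, $\underline{23}\,\underline{1}$. Equivalently, $$\mathcal C_n(321)=\theta^{-1}\big(S_{n,n}(\underline{32}\,\underline{41},\ \underline{14}\,\underline{23},\ \underline{41}\,\underline{32},\ \underline{23}\,\underline{14},\ \underline{23}\,\underline{1})\big),$$ where $S_{n,n}(\dots)$ is the set of permutations $w\in S_n$ with $w_1=n$ avoiding all listed patterns.
   Context: Permutations of $[n]=\{1,\dots,n\}$ are written in one-line notation $\pi=\pi_1\cdots\pi_n$ with $\pi_i=\pi(i)$. A permutation contains $321$ if there are $i<j<k$ with $\pi_i>\pi_j>\pi_k$, and avoids $321$ otherwise. $\mathcal C_n$ is the set of cyclic permutations of $[n]$ (cycle decomposition is a single $n$-cycle), and $\mathcal C_n(321)$ is the set of those avoiding $321$. The standard cycle notation of $\pi$ writes each cycle with its largest element first, as $(m,\pi(m),\pi^2(m),\dots)$, and lists the cycles in increasing order of their largest elements. The fundamental bijection $\theta:S_n\to S_n$ sends $\pi$ to the permutation whose one-line notation is obtained by erasing the parentheses from the standard cycle notation of $\pi$; write $\hat\pi=\theta(\pi)$. (Example: $\pi=964572813=(6,2)(9,3,4,5,7,8,1)$, so $\hat\pi=629345781$.) Vincular patterns: for a sequence $w=w_1\cdots w_N$ of distinct integers, - $w$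 contains $\underline{32}\,\underline{41}$ if there are $i,j$ with $i+2\le j\le N-1$ and $w_{j+1}<w_{i+1}<w_i<w_j$; - $w$ contains $\underline{14}\,\underline{23}$ if there are such $i,j$ with $w_i<w_j<w_{j+1}<w_{i+1}$; - $w$ contains $\underline{41}\,\underline{32}$ if there are such $i,j$ with $w_{i+1}<w_{j+1}<w_j<w_i$; - $w$ contains $\underline{23}\,\underline{14}$ if there are such $i,j$ with $w_j<w_i<w_{i+1}<w_{j+1}$; - $w$ contains $\underline{23}\,\underline{1}$ if there is $i$ with $i+1\le N-1$ and $w_N<w_i<w_{i+1}$ (the "1" must be the last entry); - $w$ contains $\underline{1}\,\underline{32}$ if there is $j$ with $2\le j\le N-1$ and $w_1<w_{j+1}<w_j$ (the "1" must be the first entry). $w$ avoids a pattern if it does not contain it. *)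

theory Defs
  imports "HOL-Combinatorics.Permutations"
begin

(* Permutations of [n] = {1..n} are functions p :: nat => nat with p permutes {1..n}. *)

definition contains_321 :: "nat \<Rightarrow> (nat \<Rightarrow> nat) \<Rightarrow> bool" where
  "contains_321 n p \<longleftrightarrow> (\<exists>i j k. 1 \<le> i \<and> i < j \<and> j < k \<and> k \<le> n \<and> p i > p j \<and> p j > p k)"

definition is_cyclic :: "nat \<Rightarrow> (nat \<Rightarrow> nat) \<Rightarrow> bool" where
  "is_cyclic n p \<longleftrightarrow> (\<forall>x\<in>{1..n}. \<exists>k. (p ^^ k) 1 = x)"

definition cyc_len :: "(nat \<Rightarrow> nat) \<Rightarrow> nat \<Rightarrow> nat" where
  "cyc_len p m = (LEAST k. 0 < k \<and> (p ^^ k) m = m)"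

definition cyc_max :: "(nat \<Rightarrow> nat) \<Rightarrow> nat \<Rightarrow> bool" where
  "cyc_max p m \<longleftrightarrow> (\<forall>k. (p ^^ k) m \<le> m)"

definition cycle_word :: "(nat \<Rightarrow> nat) \<Rightarrow> nat \<Rightarrow> nat list" where
  "cycle_word p m = map (\<lambda>k. (p ^^ k) m) [0..<cyc_len p m]"

(* fundamental bijection: erase parentheses of the standard cycle notation *)
definition theta :: "nat \<Rightarrow> (nat \<Rightarrow> nat) \<Rightarrow> nat list" where
  "theta n p = concat (map (cycle_word p) (filter (cyc_max p) [1..<Suc n]))"

(* vincular patterns on words, 0-indexed lists; with 1-indexed positions i,j of the paper
   we use i' = i-1, j' = j-1, so i+2<=j<=N-1 becomes i'+2<=j' and j'+1 < N *)
definition contains_3241 :: "nat list \<Rightarrow> bool" where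
  "contains_3241 w \<longleftrightarrow> (\<exists>i j. i + 2 \<le> j \<and> j + 1 < length w \<and>
      w!(j+1) < w!(i+1) \<and> w!(i+1) < w!i \<and> w!i < w!j)"

definition contains_1423 :: "nat list \<Rightarrow> bool" where
  "contains_1423 w \<longleftrightarrow> (\<exists>i j. i + 2 \<le> j \<and> j + 1 < length w \<and>
      w!i < w!j \<and> w!j < w!(j+1) \<and> w!(j+1) < w!(i+1))"

definition contains_4132 :: "nat list \<Rightarrow> bool" where
  "contains_4132 w \<longleftrightarrow> (\<exists>i j. i + 2 \<le> j \<and> j + 1 < length w \<and>
      w!(i+1) < w!(j+1) \<and> w!(j+1) < w!j \<and> w!j < w!i)"

definition contains_2314 :: "nat list \<Rightarrow> bool" where
  "contains_2314 w \<longleftrightarrow> (\<exists>i j. i + 2 \<le> j \<and> j + 1 < length w \<and>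
      w!j < w!i \<and> w!i < w!(i+1) \<and> w!(i+1) < w!(j+1))"

(* 23-1 with the 1 the last entry: 1-indexed i+1 <= N-1 becomes 0-indexed i+2 < N *)
definition contains_231_end :: "nat list \<Rightarrow> bool" where
  "contains_231_end w \<longleftrightarrow> (\<exists>i. i + 2 < length w \<and>
      w!(length w - 1) < w!i \<and> w!i < w!(i+1))"

end

theory Submission
  imports Defs "HOL-Combinatorics.Cycles" "HOL-Combinatorics.Orbits"
begin

(* A fixed-point-free permutation contains 321 iff it has an inversion x < y, p y < p x whose right
   end is an excedance (y < p y) or whose left end is a deficiency (p x < x): the middle entry of a
   321 is one or the other, and conversely an excedance y is followed by some k with p k \<le> y
   (dually for deficiencies), which completes the inversion to a 321.
   The first letter of theta p is the smallest cycle maximum, so it is n iff p is an n-cycle, and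
   then theta p = n, p n, p^2 n, ...: p sends each letter to the next one and the last letter to n.
   Read through this, the five vincular patterns list exactly the possible relative positions of
   the two letters of such an inversion: 14-23, 23-14 and 23-1 for excedance inversions, 32-41 and
   41-32 for deficiency inversions. *)

lemma inj_finite_enter_imp_exit:
  assumes "inj f" "finite T" "a \<notin> T" "f a \<in> T"
  shows "\<exists>k\<in>T. f k \<notin> T"
proof (rule ccontr)
  assume "\<not> ?thesis"
  then have "f ` T \<subseteq> T" by auto
  then have "f ` T = T"
    using endo_inj_surj[OF assms(2)] inj_on_subset[OF assms(1)] by (meson subset_UNIV)
  then obtain k where "k \<in> T" "f k = f a" using assms(4) by (metis imageE)
  then show False using assms(1,3) by (auto simp: inj_eq)
qed

lemma permutes_moved_in: "p permutes S \<Longrightarrow> p x \<noteq> x \<Longrightarrow> x \<in> S"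
  using permutes_not_in by metis

lemma permutes_excedance_imp_later_small_value:
  fixes p :: "nat \<Rightarrow> nat"
  assumes p: "p permutes {1..n}" and "y < p y"
  shows "\<exists>k. y < k \<and> k \<le> n \<and> p k \<le> y"
proof -
  have "y \<in> {1..n}" using assms(2) by (intro permutes_moved_in[OF p]) simp
  then have "p y \<in> {1..n}" by (rule permutes_in_image[OF p, THEN iffD2])
  then have enter: "p y \<in> {y<..n}" using assms(2) by simp
  obtain k where k: "k \<in> {y<..n}" "p k \<notin> {y<..n}"
    using inj_finite_enter_imp_exit[OF permutes_inj[OF p] finite_greaterThanAtMost _ enter] by auto
  then have "p k \<in> {1..n}" by (intro permutes_in_image[OF p, THEN iffD2]) simp
  then show ?thesis using k by auto
qed

lemma permutes_deficiency_imp_earlier_large_value: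
  fixes p :: "nat \<Rightarrow> nat"
  assumes p: "p permutes {1..n}" and "p x < x"
  shows "\<exists>k. 1 \<le> k \<and> k < x \<and> x \<le> p k"
proof -
  have x: "x \<in> {1..n}" using assms(2) by (intro permutes_moved_in[OF p]) simp
  then have "p x \<in> {1..n}" by (rule permutes_in_image[OF p, THEN iffD2])
  then have enter: "p x \<in> {1..<x}" using assms(2) by simp
  obtain k where k: "k \<in> {1..<x}" "p k \<notin> {1..<x}"
    using inj_finite_enter_imp_exit[OF permutes_inj[OF p] finite_atLeastLessThan _ enter] by auto
  then have "p k \<in> {1..n}" using x by (intro permutes_in_image[OF p, THEN iffD2]) simp
  then show ?thesis using k by auto
qed

definition excedance_inversion :: "(nat \<Rightarrow> nat) \<Rightarrow> nat \<Rightarrow> nat \<Rightarrow> bool" where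
  "excedance_inversion p x y \<longleftrightarrow> x < y \<and> y < p y \<and> p y < p x"

definition deficiency_inversion :: "(nat \<Rightarrow> nat) \<Rightarrow> nat \<Rightarrow> nat \<Rightarrow> bool" where
  "deficiency_inversion p x y \<longleftrightarrow> x < y \<and> p x < x \<and> p y < p x"

lemma contains_321_if_excedance_inversion:
  assumes p: "p permutes {1..n}" and "excedance_inversion p x y"
  shows "contains_321 n p"
proof -
  have xy: "x < y" "y < p y" "p y < p x"
    using assms(2) unfolding excedance_inversion_def by auto
  obtain k where "y < k" "k \<le> n" "p k \<le> y"
    using permutes_excedance_imp_later_small_value[OF p xy(2)] by blast
  moreover have "x \<in> {1..n}" using xy by (intro permutes_moved_in[OF p]) simp
  ultimately show ?thesis
    unfolding contains_321_def using xy by (intro exI[of _ x] exI[of _ y] exI[of _ k]) auto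
qed

lemma contains_321_if_deficiency_inversion:
  assumes p: "p permutes {1..n}" and "deficiency_inversion p x y"
  shows "contains_321 n p"
proof -
  have xy: "x < y" "p x < x" "p y < p x"
    using assms(2) unfolding deficiency_inversion_def by auto
  obtain k where "1 \<le> k" "k < x" "x \<le> p k"
    using permutes_deficiency_imp_earlier_large_value[OF p xy(2)] by blast
  moreover have "y \<in> {1..n}" using xy by (intro permutes_moved_in[OF p]) simp
  ultimately show ?thesis
    unfolding contains_321_def using xy by (intro exI[of _ k] exI[of _ x] exI[of _ y]) auto
qed

lemma contains_321_iff_inversion:
  assumes p: "p permutes {1..n}" and fixpoint_free: "\<forall>j\<in>{1..n}. p j \<noteq> j"
  shows "contains_321 n p \<longleftrightarrow>
    (\<exists>x y. excedance_inversion p x y) \<or> (\<exists>x y. deficiency_inversion p x y)"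
proof
  assume "contains_321 n p"
  then obtain i j k where ijk: "1 \<le> i" "i < j" "j < k" "k \<le> n" "p j < p i" "p k < p j"
    unfolding contains_321_def by blast
  then have "p j \<noteq> j" using fixpoint_free by auto
  then consider "j < p j" | "p j < j" by linarith
  then show "(\<exists>x y. excedance_inversion p x y) \<or> (\<exists>x y. deficiency_inversion p x y)"
  proof cases
    case 1
    then have "excedance_inversion p i j" using ijk unfolding excedance_inversion_def by auto
    then show ?thesis by blast
  next
    case 2
    then have "deficiency_inversion p j k" using ijk unfolding deficiency_inversion_def by auto
    then show ?thesis by blast
  qed
next
  assume "(\<exists>x y. excedance_inversion p x y) \<or> (\<exists>x y. deficiency_inversion p x y)"
  then show "contains_321 n p"
    using contains_321_if_excedance_inversion[OF p] contains_321_if_deficiency_inversion[OF p]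
    by blast
qed

lemma cyc_max_Max_orbit:
  fixes p :: "nat \<Rightarrow> nat"
  assumes "permutation p"
  shows "cyc_max p (Max (orbit p x))"
proof -
  have x: "x \<in> orbit p x" using permutation_self_in_orbit[OF assms] .
  have "Max (orbit p x) \<in> orbit p x"
    using finite_orbit[OF x] orbit_nonempty by (rule Max_in)
  then have "(p ^^ k) (Max (orbit p x)) \<in> orbit p x" for k
    by (rule funpow_in_orbit)
  then show ?thesis
    unfolding cyc_max_def using finite_orbit[OF x] by simp
qed

lemma is_cyclic_iff_cyclic_on:
  fixes p :: "nat \<Rightarrow> nat"
  assumes p: "p permutes {1..n}" and "1 \<le> n"
  shows "is_cyclic n p \<longleftrightarrow> cyclic_on p {1..n}"
proof -
  have perm: "permutation p" using permutes_imp_permutation[OF finite_atLeastAtMost p] .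
  have one: "1 \<in> {1..n}" using assms(2) by simp
  have "is_cyclic n p \<longleftrightarrow> {1..n} \<subseteq> orbit p 1"
    unfolding is_cyclic_def orbit_altdef_permutation[OF perm] by auto
  also have "\<dots> \<longleftrightarrow> orbit p 1 = {1..n}"
    using permutes_orbit_subset[OF p one] by auto
  also have "\<dots> \<longleftrightarrow> cyclic_on p {1..n}"
    using one cyclic_on_singleI[OF one] orbit_cyclic_eq3 by metis
  finally show ?thesis .
qed

lemma cyclic_on_iff_no_smaller_cyc_max:
  fixes p :: "nat \<Rightarrow> nat"
  assumes p: "p permutes {1..n}" and "1 \<le> n"
  shows "cyclic_on p {1..n} \<longleftrightarrow> (\<forall>m\<in>{1..<n}. \<not> cyc_max p m)"
proof -
  have perm: "permutation p" using permutes_imp_permutation[OF finite_atLeastAtMost p] .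
  show ?thesis
  proof
    assume cyc: "cyclic_on p {1..n}"
    show "\<forall>m\<in>{1..<n}. \<not> cyc_max p m"
    proof
      fix m assume m: "m \<in> {1..<n}"
      then have "n \<in> orbit p m" using orbit_cyclic_eq3[OF cyc] assms(2) by auto
      then obtain k where "(p ^^ k) m = n" unfolding orbit_altdef_permutation[OF perm] by auto
      then show "\<not> cyc_max p m"
        using m unfolding cyc_max_def by (metis atLeastLessThan_iff not_le)
    qed
  next
    assume no_smaller: "\<forall>m\<in>{1..<n}. \<not> cyc_max p m"
    have "{1..n} \<subseteq> orbit p n"
    proof
      fix x assume x: "x \<in> {1..n}"
      define m where "m = Max (orbit p x)"
      have "m \<in> orbit p x"
        unfolding m_def using finite_orbit[OF permutation_self_in_orbit[OF perm]] orbit_nonempty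
        by (rule Max_in)
      moreover have "m \<in> {1..n}" using calculation permutes_orbit_subset[OF p x] by blast
      moreover have "cyc_max p m" unfolding m_def using cyc_max_Max_orbit[OF perm] .
      ultimately have "m = n" using no_smaller by fastforce
      then have "n \<in> orbit p x" using \<open>m \<in> orbit p x\<close> by simp
      then show "x \<in> orbit p n"
        by (rule orbit_swap[OF permutation_self_in_orbit[OF perm]])
    qed
    moreover have "orbit p n \<subseteq> {1..n}" using permutes_orbit_subset[OF p] assms(2) by simp
    ultimately have "orbit p n = {1..n}" by (rule antisym[rotated])
    then show "cyclic_on p {1..n}" using assms(2) by (auto intro: cyclic_on_singleI)
  qed
qed

lemma cycle_word_eq_support: "cycle_word p m = support p m"
  unfolding cycle_word_def cyc_len_def least_power_def by (simp add: conj_commute)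

lemma support_eq_Cons:
  assumes "permutation p"
  shows "support p m = m # map (\<lambda>i. (p ^^ i) m) [1..<least_power p m]"
  using least_power_of_permutation(2)[OF assms, of m]
  by (simp add: upt_conv_Cons map_Suc_upt)

lemma cyc_max_top:
  fixes p :: "nat \<Rightarrow> nat"
  assumes p: "p permutes {1..n}" and "1 \<le> n"
  shows "cyc_max p n"
  unfolding cyc_max_def using permutes_in_funpow_image[OF p] assms(2) by auto

lemma theta_eq_concat_support:
  fixes p :: "nat \<Rightarrow> nat"
  assumes "p permutes {1..n}" and "1 \<le> n"
  shows "theta n p = concat (map (support p) (filter (cyc_max p) [1..<n])) @ support p n"
proof -
  have "[1..<Suc n] = [1..<n] @ [n]" using assms(2) by simp
  then show ?thesis
    unfolding theta_def cycle_word_eq_support[abs_def] using cyc_max_top[OF assms] by simp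
qed

lemma theta_nth_0_eq_iff:
  fixes p :: "nat \<Rightarrow> nat"
  assumes p: "p permutes {1..n}" and "1 \<le> n"
  shows "theta n p ! 0 = n \<longleftrightarrow> (\<forall>m\<in>{1..<n}. \<not> cyc_max p m)"
proof -
  note support_Cons = support_eq_Cons[OF permutes_imp_permutation[OF finite_atLeastAtMost p]]
  show ?thesis
  proof (cases "filter (cyc_max p) [1..<n]")
    case Nil
    then show ?thesis
      using theta_eq_concat_support[OF assms] support_Cons by (simp add: filter_empty_conv)
  next
    case (Cons m ms)
    then have "m \<in> set (filter (cyc_max p) [1..<n])" by simp
    then have "m \<in> {1..<n}" "cyc_max p m" by auto
    moreover have "theta n p ! 0 = m"
      using theta_eq_concat_support[OF assms] Cons support_Cons by simp
    ultimately show ?thesis by auto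
  qed
qed

lemma is_cyclic_iff_theta_nth_0:
  fixes p :: "nat \<Rightarrow> nat"
  assumes "p permutes {1..n}" and "1 \<le> n"
  shows "is_cyclic n p \<longleftrightarrow> theta n p ! 0 = n"
  using is_cyclic_iff_cyclic_on cyclic_on_iff_no_smaller_cyc_max theta_nth_0_eq_iff assms by simp

lemma contains_3241_map_upt:
  "contains_3241 (map f [0..<n]) \<longleftrightarrow>
    (\<exists>i j. i + 2 \<le> j \<and> j + 1 < n \<and> f (j + 1) < f (i + 1) \<and> f (i + 1) < f i \<and> f i < f j)"
  unfolding contains_3241_def by (intro ex_cong1) (auto simp del: upt_Suc)

lemma contains_1423_map_upt:
  "contains_1423 (map f [0..<n]) \<longleftrightarrow>
    (\<exists>i j. i + 2 \<le> j \<and> j + 1 < n \<and> f i < f j \<and> f j < f (j + 1) \<and> f (j + 1) < f (i + 1))"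
  unfolding contains_1423_def by (intro ex_cong1) (auto simp del: upt_Suc)

lemma contains_4132_map_upt:
  "contains_4132 (map f [0..<n]) \<longleftrightarrow>
    (\<exists>i j. i + 2 \<le> j \<and> j + 1 < n \<and> f (i + 1) < f (j + 1) \<and> f (j + 1) < f j \<and> f j < f i)"
  unfolding contains_4132_def by (intro ex_cong1) (auto simp del: upt_Suc)

lemma contains_2314_map_upt:
  "contains_2314 (map f [0..<n]) \<longleftrightarrow>
    (\<exists>i j. i + 2 \<le> j \<and> j + 1 < n \<and> f j < f i \<and> f i < f (i + 1) \<and> f (i + 1) < f (j + 1))"
  unfolding contains_2314_def by (intro ex_cong1) (auto simp del: upt_Suc)

lemma contains_231_end_map_upt:
  "contains_231_end (map f [0..<n]) \<longleftrightarrow>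
    (\<exists>i. i + 2 < n \<and> f (n - 1) < f i \<and> f i < f (i + 1))"
  unfolding contains_231_end_def by (intro ex_cong1) (auto simp del: upt_Suc)

locale n_cycle =
  fixes n :: nat and p :: "nat \<Rightarrow> nat"
  assumes permutes: "p permutes {1..n}" and pos: "1 \<le> n" and cyclic: "cyclic_on p {1..n}"
begin

definition orb :: "nat \<Rightarrow> nat" where
  "orb k = (p ^^ k) n"

lemma orb_0 [simp]: "orb 0 = n"
  by (simp add: orb_def)

lemma orb_Suc [simp]: "orb (Suc k) = p (orb k)"
  by (simp add: orb_def)

lemma perm: "permutation p"
  using permutes_imp_permutation[OF finite_atLeastAtMost permutes] .

lemma set_support: "set (support p n) = {1..n}"
proof -
  have "orbit p n = {1..n}" using orbit_cyclic_eq3[OF cyclic] pos by simp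
  then show ?thesis
    unfolding support_set[OF perm] orbit_altdef_permutation[OF perm] by auto
qed

lemma least_power_eq: "least_power p n = n"
  using distinct_card[OF cycle_of_permutation[OF perm, of n]] set_support by simp

lemma support_eq: "support p n = map orb [0..<n]"
  by (simp add: least_power_eq orb_def)

lemma orb_n [simp]: "orb n = n"
  using least_power_of_permutation(1)[OF perm, of n] by (simp add: least_power_eq orb_def)

lemma theta_eq: "theta n p = map orb [0..<n]"
  using theta_eq_concat_support[OF permutes pos] cyclic_on_iff_no_smaller_cyc_max[OF permutes pos]
    cyclic support_eq by (simp add: filter_empty_conv)

lemma orb_inj: "i < n \<Longrightarrow> j < n \<Longrightarrow> orb i = orb j \<longleftrightarrow> i = j"
  using cycle_of_permutation[OF perm, of n] unfolding support_eq
  by (auto simp: distinct_map inj_on_def)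

lemma orb_in: "orb i \<in> {1..n}"
  using permutes_in_funpow_image[OF permutes] pos by (simp add: orb_def)

lemma orb_surj:
  assumes "x \<in> {1..n}"
  obtains i where "i < n" "orb i = x"
proof -
  have "x \<in> orb ` {0..<n}" using assms set_support unfolding support_eq by simp
  then show ?thesis using that by auto
qed

lemma fixpoint_free:
  assumes "2 \<le> n"
  shows "\<forall>x\<in>{1..n}. p x \<noteq> x"
proof
  fix x assume "x \<in> {1..n}"
  then have "p x = x \<longleftrightarrow> card {1..n} = 1" by (rule eq_on_cyclic_on_iff1[OF cyclic])
  then show "p x \<noteq> x" using assms by simp
qed

lemma orb_Suc_less_n: "Suc i < n \<Longrightarrow> orb (Suc i) < n"
  using orb_inj[of "Suc i" 0] orb_in[of "Suc i"] by fastforce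

lemma orb_positions:
  assumes "x \<in> {1..n}" "y \<in> {1..n}" "x \<noteq> y"
  obtains i j where "i < n" "j < n" "i \<noteq> j" "orb i = x" "orb j = y"
  using orb_surj[OF assms(1)] orb_surj[OF assms(2)] assms(3) by metis

lemma patterns_imp_excedance_inversion:
  assumes "contains_1423 (theta n p) \<or> contains_2314 (theta n p) \<or> contains_231_end (theta n p)"
  shows "\<exists>x y. excedance_inversion p x y"
proof -
  consider (p1423) i j where "orb i < orb j" "orb j < orb (j + 1)" "orb (j + 1) < orb (i + 1)"
    | (p2314) i j where "orb j < orb i" "orb i < orb (i + 1)" "orb (i + 1) < orb (j + 1)"
    | (p231) i where "i + 2 < n" "orb (n - 1) < orb i" "orb i < orb (i + 1)"
    using assms
    unfolding theta_eq contains_1423_map_upt contains_2314_map_upt contains_231_end_map_upt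
    by blast
  then show ?thesis
  proof cases
    case p1423
    then have "excedance_inversion p (orb i) (orb j)" by (simp add: excedance_inversion_def)
    then show ?thesis by blast
  next
    case p2314
    then have "excedance_inversion p (orb j) (orb i)" by (simp add: excedance_inversion_def)
    then show ?thesis by blast
  next
    case p231
    have "p (orb (n - 1)) = n" using orb_Suc[of "n - 1"] pos by simp
    moreover have "p (orb i) < n" using orb_Suc_less_n[of i] p231 by simp
    ultimately have "excedance_inversion p (orb (n - 1)) (orb i)"
      using p231 by (simp add: excedance_inversion_def)
    then show ?thesis by blast
  qed
qed

lemma excedance_inversion_imp_patterns:
  assumes "excedance_inversion p x y"
  shows "contains_1423 (theta n p) \<or> contains_2314 (theta n p) \<or> contains_231_end (theta n p)"
proof -
  have xy: "x < y" "y < p y" "p y < p x"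
    using assms unfolding excedance_inversion_def by auto
  have "p x \<noteq> x" "p y \<noteq> y" using xy by auto
  then have "x \<in> {1..n}" "y \<in> {1..n}" by (blast intro: permutes_moved_in[OF permutes])+
  moreover have "x \<noteq> y" using xy by simp
  ultimately obtain i j where ij: "i < n" "j < n" "i \<noteq> j" "orb i = x" "orb j = y"
    by (rule orb_positions)
  have "p x \<le> n" using orb_in[of "Suc i"] ij by simp
  consider "i < j" | "j < i" using ij(3) by linarith
  then show ?thesis
  proof cases
    case 1
    have "orb (Suc j) \<noteq> orb n" using xy ij \<open>p x \<le> n\<close> by simp
    then have "Suc j \<noteq> n" by blast
    moreover have "j \<noteq> Suc i" using xy ij by auto
    ultimately have "contains_1423 (theta n p)"
      unfolding theta_eq contains_1423_map_upt using 1 ij xy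
      by (intro exI[of _ i] exI[of _ j]) auto
    then show ?thesis by blast
  next
    case 2
    have "i \<noteq> Suc j" using xy ij by auto
    show ?thesis
    proof (cases "Suc i = n")
      case True
      then have "contains_231_end (theta n p)"
        unfolding theta_eq contains_231_end_map_upt using 2 ij xy \<open>i \<noteq> Suc j\<close>
        by (intro exI[of _ j]) auto
      then show ?thesis by blast
    next
      case False
      then have "contains_2314 (theta n p)"
        unfolding theta_eq contains_2314_map_upt using 2 ij xy \<open>i \<noteq> Suc j\<close>
        by (intro exI[of _ j] exI[of _ i]) auto
      then show ?thesis by blast
    qed
  qed
qed

lemma patterns_imp_deficiency_inversion:
  assumes "contains_3241 (theta n p) \<or> contains_4132 (theta n p)"
  shows "\<exists>x y. deficiency_inversion p x y"
proof -
  consider (p3241) i j where "orb (j + 1) < orb (i + 1)" "orb (i + 1) < orb i" "orb i < orb j"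
    | (p4132) i j where "orb (i + 1) < orb (j + 1)" "orb (j + 1) < orb j" "orb j < orb i"
    using assms unfolding theta_eq contains_3241_map_upt contains_4132_map_upt by blast
  then show ?thesis
  proof cases
    case p3241
    then have "deficiency_inversion p (orb i) (orb j)" by (simp add: deficiency_inversion_def)
    then show ?thesis by blast
  next
    case p4132
    then have "deficiency_inversion p (orb j) (orb i)" by (simp add: deficiency_inversion_def)
    then show ?thesis by blast
  qed
qed

lemma deficiency_inversion_imp_patterns:
  assumes "deficiency_inversion p x y"
  shows "contains_3241 (theta n p) \<or> contains_4132 (theta n p)"
proof -
  have xy: "x < y" "p x < x" "p y < p x"
    using assms unfolding deficiency_inversion_def by auto
  have "p x \<noteq> x" "p y \<noteq> y" using xy by auto
  then have xy_in: "x \<in> {1..n}" "y \<in> {1..n}" by (blast intro: permutes_moved_in[OF permutes])+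
  moreover have "x \<noteq> y" using xy by simp
  ultimately obtain i j where ij: "i < n" "j < n" "i \<noteq> j" "orb i = x" "orb j = y"
    by (rule orb_positions)
  consider "i < j" | "j < i" using ij(3) by linarith
  then show ?thesis
  proof cases
    case 1
    have "orb (Suc j) \<noteq> orb n" using xy ij xy_in by simp
    then have "Suc j \<noteq> n" by blast
    moreover have "j \<noteq> Suc i" using xy ij by auto
    ultimately have "contains_3241 (theta n p)"
      unfolding theta_eq contains_3241_map_upt using 1 ij xy
      by (intro exI[of _ i] exI[of _ j]) auto
    then show ?thesis by blast
  next
    case 2
    have "orb (Suc i) \<noteq> orb n" using xy ij xy_in by simp
    then have "Suc i \<noteq> n" by blast
    moreover have "i \<noteq> Suc j" using xy ij by auto
    ultimately have "contains_4132 (theta n p)"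
      unfolding theta_eq contains_4132_map_upt using 2 ij xy
      by (intro exI[of _ j] exI[of _ i]) auto
    then show ?thesis by blast
  qed
qed

lemma contains_321_iff_patterns:
  "contains_321 n p \<longleftrightarrow>
    contains_3241 (theta n p) \<or> contains_1423 (theta n p) \<or> contains_4132 (theta n p) \<or>
    contains_2314 (theta n p) \<or> contains_231_end (theta n p)"
proof
  assume "contains_321 n p"
  moreover from this have "2 \<le> n" unfolding contains_321_def by auto
  ultimately have "(\<exists>x y. excedance_inversion p x y) \<or> (\<exists>x y. deficiency_inversion p x y)"
    using contains_321_iff_inversion[OF permutes fixpoint_free] by blast
  then show "contains_3241 (theta n p) \<or> contains_1423 (theta n p) \<or> contains_4132 (theta n p) \<or>
    contains_2314 (theta n p) \<or> contains_231_end (theta n p)"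
    using excedance_inversion_imp_patterns deficiency_inversion_imp_patterns by blast
qed (use patterns_imp_excedance_inversion patterns_imp_deficiency_inversion
      contains_321_if_excedance_inversion[OF permutes] contains_321_if_deficiency_inversion[OF permutes]
      in blast)

end

theorem mainTheorem1:
  fixes n :: nat and p :: "nat \<Rightarrow> nat"
  assumes "n \<ge> 1" and "p permutes {1..n}"
  shows "(is_cyclic n p \<and> \<not> contains_321 n p) \<longleftrightarrow>
         (theta n p ! 0 = n \<and> \<not> contains_3241 (theta n p) \<and> \<not> contains_1423 (theta n p)
          \<and> \<not> contains_4132 (theta n p) \<and> \<not> contains_2314 (theta n p)
          \<and> \<not> contains_231_end (theta n p))"
proof -
  have cyclic_iff: "is_cyclic n p \<longleftrightarrow> theta n p ! 0 = n"
    by (rule is_cyclic_iff_theta_nth_0[OF assms(2,1)])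
  show ?thesis
  proof (cases "is_cyclic n p")
    case True
    then interpret n_cycle n p
      using assms is_cyclic_iff_cyclic_on by unfold_locales auto
    show ?thesis using True cyclic_iff contains_321_iff_patterns by blast
  next
    case False
    then show ?thesis using cyclic_iff by blast
  qed
qed

end
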